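(* Let $B=\bigoplus_{i\in\mathbb{Z}}B_i$ be a $\mathbb{Z}$-graded integral domain containing $\mathbb{Q}$, and let $D:B\to B$ be a nonzero homogeneous locally nilpotent derivation such that $\ker D\not\subseteq B_0$. Then some element of $D(B)\cap\ker(D)$ is a cylindrical element of $B$.
   Context: A derivation $D$ is homogeneous if there is $d$ with $D(B_i)\subseteq B_{i+d}$ for all $i$; it is locally nilpotent if for each $b$ there is $n>0$ with $D^n(b)=0$. For nonzero homogeneous $f$, $B_{(f)}$ is the degree-$0$ subring of $B_f$. A ring is a polynomial ring in one variable if it is a polynomial ring in one variable over some subring (the zero ring counts). A cylindrical element of $B$ is a nonzero homogeneous $f$ of nonzero degree with $B_{(f)}$ a polynomial ring in one variable. *)

theory Defs
  imports "HOL-Computational_Algebra.Polynomial" "HOL-Computational_Algebra.Fraction_Field"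
begin

definition Z_graded :: "(int \<Rightarrow> 'b::comm_ring_1 set) \<Rightarrow> bool" where
  "Z_graded Bg \<longleftrightarrow>
     (\<forall>i. 0 \<in> Bg i \<and> (\<forall>x\<in>Bg i. \<forall>y\<in>Bg i. x + y \<in> Bg i \<and> - x \<in> Bg i)) \<and>
     (\<forall>i j. \<forall>x\<in>Bg i. \<forall>y\<in>Bg j. x * y \<in> Bg (i + j)) \<and>
     (\<forall>b. \<exists>!c::int \<Rightarrow> 'b. (\<forall>i. c i \<in> Bg i) \<and> finite {i. c i \<noteq> 0} \<and>
            b = (\<Sum>i\<in>{i. c i \<noteq> 0}. c i))"

definition contains_rationals :: "'b::comm_ring_1 itself \<Rightarrow> bool" where
  "contains_rationals _ \<longleftrightarrow> (\<forall>n::nat. n > 0 \<longrightarrow> (of_nat n :: 'b) dvd 1)"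

definition derivation :: "('b::comm_ring_1 \<Rightarrow> 'b) \<Rightarrow> bool" where
  "derivation D \<longleftrightarrow> (\<forall>a b. D (a + b) = D a + D b) \<and> (\<forall>a b. D (a * b) = a * D b + b * D a)"

definition homogeneous_map :: "(int \<Rightarrow> 'b set) \<Rightarrow> ('b \<Rightarrow> 'b) \<Rightarrow> bool" where
  "homogeneous_map Bg D \<longleftrightarrow> (\<exists>d. \<forall>i. D ` Bg i \<subseteq> Bg (i + d))"

definition locally_nilpotent :: "('b::zero \<Rightarrow> 'b) \<Rightarrow> bool" where
  "locally_nilpotent D \<longleftrightarrow> (\<forall>b. \<exists>n>0. (D ^^ n) b = 0)"

definition homogeneous :: "(int \<Rightarrow> 'b set) \<Rightarrow> 'b \<Rightarrow> bool" where
  "homogeneous Bg f \<longleftrightarrow> (\<exists>i. f \<in> Bg i)"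

text \<open>Degree-0 part of the localization B_f, realized inside the fraction field:
  the homogeneous elements of degree 0 of B_f are exactly b / f^n with b \<in> B_{n * deg f}.\<close>
definition hloc0 :: "(int \<Rightarrow> 'b::idom set) \<Rightarrow> 'b \<Rightarrow> 'b fract set" where
  "hloc0 Bg f = {Fract b (f ^ n) | b n. \<exists>e. f \<in> Bg e \<and> b \<in> Bg (int n * e)}"

definition is_subring :: "'a::comm_ring_1 set \<Rightarrow> bool" where
  "is_subring R \<longleftrightarrow> 0 \<in> R \<and> 1 \<in> R \<and>
     (\<forall>x\<in>R. \<forall>y\<in>R. x + y \<in> R \<and> x - y \<in> R \<and> x * y \<in> R)"

text \<open>S is a polynomial ring in one variable over some subring R: S = R[t] with t
  algebraically independent over R (evaluation R[X] \<rightarrow> S at t is bijective).\<close>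
definition poly_ring_one_var :: "'a::comm_ring_1 set \<Rightarrow> bool" where
  "poly_ring_one_var S \<longleftrightarrow> is_subring S \<and>
     (\<exists>R t. is_subring R \<and> R \<subseteq> S \<and> t \<in> S \<and>
        (\<forall>s\<in>S. \<exists>p. (\<forall>i. coeff p i \<in> R) \<and> poly p t = s) \<and>
        (\<forall>p. (\<forall>i. coeff p i \<in> R) \<and> poly p t = 0 \<longrightarrow> p = 0))"

definition cylindrical :: "(int \<Rightarrow> 'b::idom set) \<Rightarrow> 'b \<Rightarrow> bool" where
  "cylindrical Bg f \<longleftrightarrow> f \<noteq> 0 \<and> (\<exists>e. e \<noteq> 0 \<and> f \<in> Bg e) \<and> poly_ring_one_var (hloc0 Bg f)"

end

theory Submission
  imports Defs
begin

text \<open>Let A = ker D. A local slice r (D r = f \<noteq> 0, D f = 0) is transcendental over A, and by the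
  slice theorem f^k b \<in> A[r] for every b; here the rationals are needed. Take a homogeneous local
  slice r0 of degree \<delta> and let m be the least positive integer such that m \<delta> lies in the group
  generated by the degrees of nonzero homogeneous elements of A (some multiple does, since one of these
  degrees is nonzero); write m \<delta> = deg \<alpha> - deg \<beta>. Replacing r0 by r = c r0 with c = \<alpha> \<beta> g, where
  g \<in> A is chosen to make the degree of f = D r nonzero, makes \<alpha> and \<beta> invertible in A_f. By the
  choice of m only the powers r^(m q) occur in degree-0 fractions, so B_(f) = A_(f)[t] with
  t = \<beta> r0^m / \<alpha>, and t is transcendental over A_(f) because r is transcendental over A.\<close>

lemma int_mult_mem_subgroup:
  fixes G :: "int set"
  assumes diff: "\<And>x y. x \<in> G \<Longrightarrow> y \<in> G \<Longrightarrow> x - y \<in> G" and "x \<in> G"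
  shows "int k * x \<in> G"
proof (induct k)
  case 0
  then show ?case
    using diff[OF assms(2) assms(2)] by simp
next
  case (Suc k)
  have "x - (x - x - int k * x) \<in> G"
    using diff[OF assms(2) diff[OF diff[OF assms(2) assms(2)] Suc]] .
  then show ?case
    by (simp add: algebra_simps)
qed

lemma exists_least_multiple_in_subgroup:
  fixes G :: "int set" and \<delta> :: int
  assumes diff: "\<And>x y. x \<in> G \<Longrightarrow> y \<in> G \<Longrightarrow> x - y \<in> G" and "n > 0" "int n * \<delta> \<in> G"
  shows "\<exists>m>0. int m * \<delta> \<in> G \<and> (\<forall>i. int i * \<delta> \<in> G \<longrightarrow> m dvd i)"
proof -
  define m where "m = (LEAST m. m > 0 \<and> int m * \<delta> \<in> G)"
  have m: "m > 0" "int m * \<delta> \<in> G"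
    using LeastI[of "\<lambda>m. m > 0 \<and> int m * \<delta> \<in> G", OF conjI[OF assms(2,3)]] unfolding m_def by auto
  have "m dvd i" if "int i * \<delta> \<in> G" for i
  proof (rule ccontr)
    assume "\<not> m dvd i"
    have "int i = int (i div m) * int m + int (i mod m)"
      by (metis div_mult_mod_eq of_nat_add of_nat_mult)
    then have "int (i mod m) * \<delta> = int i * \<delta> - int (i div m) * (int m * \<delta>)"
      by (simp add: algebra_simps)
    then have "int (i mod m) * \<delta> \<in> G"
      using diff[OF that int_mult_mem_subgroup[OF diff m(2)]] by simp
    moreover have "i mod m > 0"
      using \<open>\<not> m dvd i\<close> by (simp add: dvd_eq_mod_eq_0)
    ultimately have "m \<le> i mod m"
      unfolding m_def by (intro Least_le) simp
    then show False
      using mod_less_divisor[OF m(1), of i] by linarith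
  qed
  then show ?thesis
    using m by blast
qed

lemma sum_atMost_multiples:
  fixes g :: "nat \<Rightarrow> 'a::comm_monoid_add"
  assumes "m > 0" and "\<And>i. \<not> m dvd i \<Longrightarrow> g i = 0" and "\<And>i. N < i \<Longrightarrow> g i = 0"
  shows "(\<Sum>q\<le>N. g (m * q)) = (\<Sum>i\<le>N. g i)"
proof -
  have "(\<Sum>q\<le>N. g (m * q)) = sum g ((*) m ` {..N})"
    using assms(1) by (simp add: sum.reindex inj_on_def)
  also have "\<dots> = sum g {..N}"
  proof (rule sum.same_carrierI[where C = "(*) m ` {..N} \<union> {..N}"])
    show "g i = 0" if "i \<in> (*) m ` {..N} \<union> {..N} - (*) m ` {..N}" for i
    proof (rule ccontr)
      assume "g i \<noteq> 0"
      then obtain q where "i = m * q"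
        using assms(2) by blast
      moreover have "q \<le> N"
        using that assms(1) \<open>i = m * q\<close> by (auto intro: order_trans[of q "m * q"])
      ultimately show False
        using that by blast
    qed
  qed (use assms(3) in auto)
  finally show ?thesis .
qed

section \<open>Homogeneous components\<close>

locale Z_graded_ring =
  fixes Bg :: "int \<Rightarrow> 'a::comm_ring_1 set"
  assumes graded: "Z_graded Bg"
begin

lemma zero_mem [simp]: "0 \<in> Bg i"
  using graded unfolding Z_graded_def by blast

lemma add_mem: "x \<in> Bg i \<Longrightarrow> y \<in> Bg i \<Longrightarrow> x + y \<in> Bg i"
  using graded unfolding Z_graded_def by blast

lemma uminus_mem: "x \<in> Bg i \<Longrightarrow> - x \<in> Bg i"
  using graded unfolding Z_graded_def by blast

lemma diff_mem: "x \<in> Bg i \<Longrightarrow> y \<in> Bg i \<Longrightarrow> x - y \<in> Bg i"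
  using add_mem[of x i "- y"] uminus_mem[of y i] by simp

lemma mult_mem: "x \<in> Bg i \<Longrightarrow> y \<in> Bg j \<Longrightarrow> x * y \<in> Bg (i + j)"
  using graded unfolding Z_graded_def by blast

lemma mult_mem': "x \<in> Bg i \<Longrightarrow> y \<in> Bg j \<Longrightarrow> k = i + j \<Longrightarrow> x * y \<in> Bg k"
  using mult_mem by blast

lemma ex1_decomposition:
  "\<exists>!c. (\<forall>i. c i \<in> Bg i) \<and> finite {i. c i \<noteq> 0} \<and> b = (\<Sum>i\<in>{i. c i \<noteq> 0}. c i)"
  using graded unfolding Z_graded_def by blast

definition hcomp :: "'a \<Rightarrow> int \<Rightarrow> 'a" where
  "hcomp b = (THE c. (\<forall>i. c i \<in> Bg i) \<and> finite {i. c i \<noteq> 0} \<and> b = (\<Sum>i\<in>{i. c i \<noteq> 0}. c i))"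

lemma hcomp_mem: "hcomp b i \<in> Bg i"
  and finite_hcomp_support: "finite {i. hcomp b i \<noteq> 0}"
  and sum_hcomp: "(\<Sum>i\<in>{i. hcomp b i \<noteq> 0}. hcomp b i) = b"
  using theI'[OF ex1_decomposition[of b]] unfolding hcomp_def[symmetric] by auto

lemma sum_hcomp_superset:
  assumes "finite I" "{i. hcomp b i \<noteq> 0} \<subseteq> I"
  shows "(\<Sum>i\<in>I. hcomp b i) = b"
proof -
  have "(\<Sum>i\<in>I. hcomp b i) = (\<Sum>i\<in>{i. hcomp b i \<noteq> 0}. hcomp b i)"
    by (rule sum.mono_neutral_right[OF assms]) auto
  then show ?thesis
    using sum_hcomp[of b] by simp
qed

lemma hcomp_eqI:
  assumes "\<And>i. c i \<in> Bg i" "finite I" "\<And>i. i \<notin> I \<Longrightarrow> c i = 0" "b = (\<Sum>i\<in>I. c i)"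
  shows "hcomp b = c"
  unfolding hcomp_def
proof (rule the1_equality[OF ex1_decomposition], intro conjI)
  have support: "{i. c i \<noteq> 0} \<subseteq> I"
    using assms(3) by blast
  then show "finite {i. c i \<noteq> 0}"
    using assms(2) finite_subset by blast
  have "(\<Sum>i\<in>{i. c i \<noteq> 0}. c i) = (\<Sum>i\<in>I. c i)"
    by (rule sum.mono_neutral_left[OF assms(2) support]) auto
  then show "b = (\<Sum>i\<in>{i. c i \<noteq> 0}. c i)"
    using assms(4) by simp
qed (use assms(1) in blast)

lemma hcomp_homogeneous: "x \<in> Bg j \<Longrightarrow> hcomp x = (\<lambda>i. if i = j then x else 0)"
  by (rule hcomp_eqI[where I = "{j}"]) auto

lemma hcomp_zero [simp]: "hcomp 0 i = 0"
  using hcomp_homogeneous[OF zero_mem] by simp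

lemma hcomp_add: "hcomp (a + b) i = hcomp a i + hcomp b i"
proof -
  let ?I = "{i. hcomp a i \<noteq> 0} \<union> {i. hcomp b i \<noteq> 0}"
  have "hcomp (a + b) = (\<lambda>i. hcomp a i + hcomp b i)"
  proof (rule hcomp_eqI[where I = ?I])
    show "a + b = (\<Sum>i\<in>?I. hcomp a i + hcomp b i)"
      using sum_hcomp_superset[of ?I a] sum_hcomp_superset[of ?I b] finite_hcomp_support
      by (simp add: sum.distrib)
  qed (use finite_hcomp_support in \<open>auto intro: add_mem hcomp_mem\<close>)
  then show ?thesis
    by simp
qed

lemma hcomp_sum: "hcomp (\<Sum>k\<in>K. g k) i = (\<Sum>k\<in>K. hcomp (g k) i)"
  by (induct K rule: infinite_finite_induct) (auto simp: hcomp_add)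

lemma homogeneous_degree_unique: "x \<noteq> 0 \<Longrightarrow> x \<in> Bg i \<Longrightarrow> x \<in> Bg j \<Longrightarrow> i = j"
  using hcomp_homogeneous[of x i] hcomp_homogeneous[of x j] by metis

lemma hcomp_additive_map:
  assumes additive: "\<And>x y. \<phi> (x + y) = \<phi> x + \<phi> y"
    and degree: "\<And>i x. x \<in> Bg i \<Longrightarrow> \<phi> x \<in> Bg (i + d)"
  shows "hcomp (\<phi> b) i = \<phi> (hcomp b (i - d))"
proof -
  have zero: "\<phi> 0 = 0"
    using additive[of 0 0] by simp
  have sum: "\<phi> (sum g I) = (\<Sum>k\<in>I. \<phi> (g k))" for g and I :: "int set"
    by (induct I rule: infinite_finite_induct) (auto simp: zero additive)
  let ?I = "(\<lambda>i. i + d) ` {i. hcomp b i \<noteq> 0}"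
  have "hcomp (\<phi> b) = (\<lambda>i. \<phi> (hcomp b (i - d)))"
  proof (rule hcomp_eqI[where I = ?I])
    show "\<phi> (hcomp b (i - d)) \<in> Bg i" for i
      using degree[OF hcomp_mem[of b "i - d"]] by simp
    show "\<phi> (hcomp b (i - d)) = 0" if "i \<notin> ?I" for i
    proof -
      have "hcomp b (i - d) = 0"
        using that by (metis (mono_tags, lifting) diff_add_cancel image_eqI mem_Collect_eq)
      then show ?thesis
        by (simp add: zero)
    qed
    have "\<phi> b = (\<Sum>i\<in>{i. hcomp b i \<noteq> 0}. \<phi> (hcomp b i))"
      using sum_hcomp[of b] sum by metis
    also have "\<dots> = (\<Sum>i\<in>?I. \<phi> (hcomp b (i - d)))"
      by (subst sum.reindex) (auto simp: inj_on_def)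
    finally show "\<phi> b = (\<Sum>i\<in>?I. \<phi> (hcomp b (i - d)))" .
  qed (use finite_hcomp_support in blast)
  then show ?thesis
    by simp
qed

lemma one_mem: "1 \<in> Bg 0"
proof -
  have unit: "hcomp 1 0 * h = h" if "h \<in> Bg e" for h e
    using hcomp_additive_map[of "\<lambda>x. x * h" e 1 e] that
    by (simp add: distrib_right mult_mem hcomp_homogeneous)
  have "hcomp 1 0 = hcomp 1 0 * (\<Sum>i\<in>{i. hcomp 1 i \<noteq> 0}. hcomp 1 i)"
    by (simp add: sum_hcomp)
  also have "\<dots> = (\<Sum>i\<in>{i. hcomp 1 i \<noteq> 0}. hcomp 1 0 * hcomp 1 i)"
    by (simp add: sum_distrib_left)
  also have "\<dots> = 1"
    using sum_hcomp[of 1] by (simp add: unit[OF hcomp_mem])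
  finally show ?thesis
    using hcomp_mem[of 1 0] by simp
qed

lemma power_mem: "x \<in> Bg i \<Longrightarrow> x ^ n \<in> Bg (int n * i)"
  by (induct n) (auto simp: one_mem algebra_simps intro!: mult_mem')

lemma exists_hcomp_outside: "b \<notin> Bg j \<Longrightarrow> \<exists>i. i \<noteq> j \<and> hcomp b i \<noteq> 0"
  using sum_hcomp_superset[of "{j}" b] hcomp_mem[of b j] by fastforce

end

section \<open>Derivations and local slices\<close>

locale ring_derivation =
  fixes D :: "'a::comm_ring_1 \<Rightarrow> 'a"
  assumes derivation: "derivation D"
begin

lemma D_add: "D (a + b) = D a + D b"
  using derivation unfolding derivation_def by blast

lemma D_mult: "D (a * b) = a * D b + b * D a"
  using derivation unfolding derivation_def by blast

lemma D_zero [simp]: "D 0 = 0"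
  using D_add[of 0 0] by simp

lemma D_one [simp]: "D 1 = 0"
  using D_mult[of 1 1] by simp

lemma D_uminus: "D (- a) = - D a"
  using D_add[of a "- a"] by (simp add: eq_neg_iff_add_eq_0 add.commute)

lemma D_diff: "D (a - b) = D a - D b"
  using D_add[of a "- b"] D_uminus[of b] by simp

lemma D_sum: "D (\<Sum>k\<in>I. g k) = (\<Sum>k\<in>I. D (g k))"
  by (induct I rule: infinite_finite_induct) (auto simp: D_add)

lemma D_of_nat [simp]: "D (of_nat n) = 0"
  by (induct n) (auto simp: D_add)

lemma D_mult_kernel_left: "D a = 0 \<Longrightarrow> D (a * b) = a * D b"
  by (simp add: D_mult)

lemma D_mult_kernel: "D a = 0 \<Longrightarrow> D b = 0 \<Longrightarrow> D (a * b) = 0"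
  by (simp add: D_mult)

lemma D_power_kernel: "D a = 0 \<Longrightarrow> D (a ^ n) = 0"
  by (induct n) (auto simp: D_mult_kernel)

lemma D_power: "D (x ^ Suc n) = of_nat (Suc n) * x ^ n * D x"
  by (induct n) (simp_all add: D_mult algebra_simps)

abbreviation kernel :: "'a set" where
  "kernel \<equiv> {a. D a = 0}"

lemma is_subring_kernel: "is_subring kernel"
  by (simp add: is_subring_def D_add D_diff D_mult)

lemma funpow_D_zero [simp]: "(D ^^ j) 0 = 0"
  by (induct j) auto

lemma funpow_D_diff: "(D ^^ j) (a - b) = (D ^^ j) a - (D ^^ j) b"
  by (induct j) (auto simp: D_diff)

lemma funpow_D_sum: "(D ^^ j) (\<Sum>k\<in>I. g k) = (\<Sum>k\<in>I. (D ^^ j) (g k))"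
  by (induct j) (auto simp: D_sum)

lemma funpow_D_mult_kernel_left: "D a = 0 \<Longrightarrow> (D ^^ j) (a * x) = a * (D ^^ j) x"
  by (induct j) (auto simp: D_mult_kernel_left)

lemma exists_funpow_local_slice:
  assumes "(D ^^ n) y = 0" "D y \<noteq> 0"
  shows "\<exists>k. D ((D ^^ k) y) \<noteq> 0 \<and> D (D ((D ^^ k) y)) = 0"
  using assms
proof (induct n arbitrary: y)
  case (Suc n)
  show ?case
  proof (cases "D (D y) = 0")
    case False
    then obtain k where "D ((D ^^ k) (D y)) \<noteq> 0 \<and> D (D ((D ^^ k) (D y))) = 0"
      using Suc.hyps[of "D y"] Suc.prems(1) by (auto simp: funpow_Suc_right simp del: funpow.simps)
    then show ?thesis
      by (metis comp_apply funpow_Suc_right)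
  qed (use Suc.prems in \<open>auto intro: exI[of _ 0]\<close>)
qed simp

context
  fixes r f :: 'a
  assumes D_slice: "D r = f" and D_f: "D f = 0"
begin

lemma funpow_D_slice_power:
  "(D ^^ j) (r ^ (k + j)) * of_nat (fact k) = of_nat (fact (k + j)) * r ^ k * f ^ j"
proof (induct j arbitrary: k)
  case (Suc j)
  have "(D ^^ Suc j) (r ^ (k + Suc j)) = (D ^^ j) ((of_nat (Suc (k + j)) * f) * r ^ (k + j))"
    using D_power[of r "k + j"] by (simp add: funpow_Suc_right D_slice algebra_simps del: funpow.simps)
  also have "\<dots> = (of_nat (Suc (k + j)) * f) * (D ^^ j) (r ^ (k + j))"
    by (rule funpow_D_mult_kernel_left) (simp add: D_mult D_f del: of_nat_Suc)
  finally show ?case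
    using Suc[of k] by (simp add: algebra_simps)
qed simp

lemma funpow_D_slice_power_self: "(D ^^ n) (r ^ n) = of_nat (fact n) * f ^ n"
  using funpow_D_slice_power[of n 0] by simp

lemma funpow_D_slice_power_vanish:
  assumes "k < j"
  shows "(D ^^ j) (r ^ k) = 0"
proof -
  have "(D ^^ Suc k) (r ^ k) = 0"
    using funpow_D_slice_power_self[of k] by (simp add: D_mult D_power_kernel[OF D_f])
  moreover have "j = (j - Suc k) + Suc k"
    using assms by simp
  ultimately show ?thesis
    by (metis funpow_D_zero funpow_add o_apply)
qed

end

end

locale Q_domain_derivation = ring_derivation D for D :: "'a::idom \<Rightarrow> 'a" +
  assumes rationals: "contains_rationals TYPE('a)"
begin

lemma of_nat_neq_zero: "n > 0 \<Longrightarrow> (of_nat n :: 'a) \<noteq> 0"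
  using rationals unfolding contains_rationals_def by (metis dvd_0_left_iff zero_neq_one)

lemma exists_kernel_inverse_of_nat:
  assumes "n > 0"
  shows "\<exists>c. c * of_nat n = 1 \<and> D c = 0"
proof -
  obtain c where c: "c * of_nat n = (1::'a)"
    using rationals assms unfolding contains_rationals_def by (metis dvdE mult.commute)
  then have "of_nat n * D c = 0"
    using D_mult[of c "of_nat n"] by simp
  then show ?thesis
    using c of_nat_neq_zero[OF assms] by auto
qed

context
  fixes r f :: 'a
  assumes D_slice: "D r = f" and D_f: "D f = 0"
begin

lemma slice_transcendental:
  assumes "f \<noteq> 0" and kernel_coeffs: "\<And>i. D (coeff P i) = 0" and root: "poly P r = 0"
  shows "P = 0"
proof (rule ccontr)
  assume "P \<noteq> 0"
  let ?n = "degree P"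
  have "(D ^^ ?n) (poly P r) = (\<Sum>i\<le>?n. coeff P i * (D ^^ ?n) (r ^ i))"
    by (simp add: poly_altdef funpow_D_sum funpow_D_mult_kernel_left kernel_coeffs)
  also have "\<dots> = (\<Sum>i<?n. coeff P i * (D ^^ ?n) (r ^ i)) + coeff P ?n * (D ^^ ?n) (r ^ ?n)"
    by (simp add: lessThan_Suc_atMost[symmetric])
  also have "\<dots> = coeff P ?n * (of_nat (fact ?n) * f ^ ?n)"
    by (simp add: funpow_D_slice_power_vanish[OF D_slice D_f] funpow_D_slice_power_self[OF D_slice D_f])
  finally have "coeff P ?n = 0"
    using root of_nat_neq_zero[of "fact ?n"] \<open>f \<noteq> 0\<close> by simp
  with \<open>P \<noteq> 0\<close> show False
    by simp
qed

lemma slice_power_transcendental: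
  assumes "f \<noteq> 0" "m > 0" and kernel_coeffs: "\<And>q. D (y q) = 0"
    and root: "(\<Sum>q\<le>N. y q * r ^ (m * q)) = 0" and "q \<le> N"
  shows "y q = 0"
proof -
  define Y where "Y = (\<Sum>q\<le>N. monom (y q) (m * q))"
  have "poly Y r = 0"
    using root unfolding Y_def by (simp add: poly_sum poly_monom)
  moreover have "D (coeff Y i) = 0" for i
    unfolding Y_def coeff_sum D_sum by (intro sum.neutral) (simp add: coeff_monom kernel_coeffs)
  ultimately have "Y = 0"
    using slice_transcendental[OF assms(1)] by blast
  moreover have "coeff Y (m * q) = y q"
    unfolding Y_def coeff_sum using assms(2,5) by (simp add: coeff_monom)
  ultimately show ?thesis
    by simp
qed

text \<open>Induction on the nilpotency order of \<open>b\<close>: subtracting \<open>(D\<^sup>n b / n!) r\<^sup>n\<close> from \<open>f\<^sup>n b\<close>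
  lowers it.\<close>

lemma kernel_poly_expansion:
  assumes "(D ^^ n) b = 0"
  shows "\<exists>k P. (\<forall>i. D (coeff P i) = 0) \<and> f ^ k * b = poly P r"
  using assms
proof (induct n arbitrary: b)
  case 0
  then show ?case
    by (intro exI[of _ 0] exI[of _ 0]) simp
next
  case (Suc n)
  define a where "a = (D ^^ n) b"
  have D_a: "D a = 0"
    using Suc.prems unfolding a_def by simp
  obtain c where c: "c * of_nat (fact n) = 1" "D c = 0"
    using exists_kernel_inverse_of_nat[of "fact n"] by auto
  have "(D ^^ n) (f ^ n * b - c * a * r ^ n) = f ^ n * a - c * a * (of_nat (fact n) * f ^ n)"
    unfolding funpow_D_diff funpow_D_mult_kernel_left[OF D_power_kernel[OF D_f]]
      funpow_D_mult_kernel_left[OF D_mult_kernel[OF c(2) D_a]]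
      funpow_D_slice_power_self[OF D_slice D_f] a_def[symmetric] ..
  also have "\<dots> = 0"
    using c(1) by (simp add: algebra_simps)
  finally obtain k P where P: "\<forall>i. D (coeff P i) = 0" "f ^ k * (f ^ n * b - c * a * r ^ n) = poly P r"
    using Suc.hyps by blast
  have "f ^ (k + n) * b = poly (P + monom (f ^ k * c * a) n) r"
    using P(2) by (simp add: poly_monom algebra_simps power_add)
  moreover have "\<forall>i. D (coeff (P + monom (f ^ k * c * a) n) i) = 0"
    using P(1) by (simp add: D_add coeff_monom D_mult_kernel D_power_kernel D_f c(2) D_a)
  ultimately show ?case
    by blast
qed

end

end

section \<open>Homogeneous localization\<close>

definition fract_of :: "'a::idom \<Rightarrow> 'a fract" where
  "fract_of x = Fract x 1"

lemma fract_of_add [simp]: "fract_of (a + b) = fract_of a + fract_of b"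
  and fract_of_mult [simp]: "fract_of (a * b) = fract_of a * fract_of b"
  and fract_of_diff [simp]: "fract_of (a - b) = fract_of a - fract_of b"
  and fract_of_0 [simp]: "fract_of 0 = 0"
  and fract_of_1 [simp]: "fract_of 1 = 1"
  by (simp_all add: fract_of_def fract_collapse)

lemma fract_of_power [simp]: "fract_of (a ^ n) = fract_of a ^ n"
  by (induct n) auto

lemma fract_of_sum [simp]: "fract_of (\<Sum>k\<in>I. g k) = (\<Sum>k\<in>I. fract_of (g k))"
  by (induct I rule: infinite_finite_induct) auto

lemma fract_of_eq_0_iff [simp]: "fract_of a = 0 \<longleftrightarrow> a = 0"
  by (simp add: fract_of_def eq_fract Zero_fract_def)

lemma fract_of_clear_denominator:
  assumes "f \<noteq> 0" "n \<le> M"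
  shows "fract_of f ^ M * (fract_of a / fract_of f ^ n) = fract_of (a * f ^ (M - n))"
proof -
  obtain k where "M = n + k"
    using assms(2) le_Suc_ex by blast
  then show ?thesis
    using assms(1) by (simp add: power_add)
qed

lemma Fract_eq_divide: "Fract a b = fract_of a / fract_of b"
  by (cases "b = 0") (simp_all add: fract_of_def fract_collapse)

locale Z_graded_domain = Z_graded_ring Bg for Bg :: "int \<Rightarrow> 'a::idom set"
begin

text \<open>\<open>hloc X f e\<close> is the degree-\<open>e\<close> part \<open>(X\<^sub>f)\<^sub>e\<close> of the localization of \<open>X\<close> at \<open>f\<close>.\<close>

definition hloc :: "'a set \<Rightarrow> 'a \<Rightarrow> int \<Rightarrow> 'a fract set" where
  "hloc X f e = {fract_of b / fract_of f ^ n | b n. b \<in> X \<and> (\<exists>E. f \<in> Bg E \<and> b \<in> Bg (int n * E + e))}"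

lemma hloc0_eq_hloc: "hloc0 Bg f = hloc UNIV f 0"
  unfolding hloc0_def hloc_def by (simp add: Fract_eq_divide)

lemma hloc_mono: "X \<subseteq> Y \<Longrightarrow> hloc X f e \<subseteq> hloc Y f e"
  unfolding hloc_def by blast

context
  fixes f :: 'a and E :: int
  assumes f_nonzero: "f \<noteq> 0" and f_mem: "f \<in> Bg E"
begin

lemma hloc_eq: "hloc X f e = {fract_of b / fract_of f ^ n | b n. b \<in> X \<and> b \<in> Bg (int n * E + e)}"
  using homogeneous_degree_unique[OF f_nonzero _ f_mem] f_mem unfolding hloc_def by blast

lemma hlocI: "b \<in> X \<Longrightarrow> b \<in> Bg (int n * E + e) \<Longrightarrow> fract_of b / fract_of f ^ n \<in> hloc X f e"
  unfolding hloc_eq by blast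

lemma hlocE:
  assumes "x \<in> hloc X f e"
  obtains b n where "x = fract_of b / fract_of f ^ n" "b \<in> X" "b \<in> Bg (int n * E + e)"
  using assms unfolding hloc_eq by blast

context
  fixes X :: "'a set"
  assumes subring: "is_subring X"
begin

lemma hloc_mult:
  assumes "x \<in> hloc X f e1" "y \<in> hloc X f e2"
  shows "x * y \<in> hloc X f (e1 + e2)"
proof -
  obtain b1 n1 where x: "x = fract_of b1 / fract_of f ^ n1" "b1 \<in> X" "b1 \<in> Bg (int n1 * E + e1)"
    using assms(1) by (rule hlocE)
  obtain b2 n2 where y: "y = fract_of b2 / fract_of f ^ n2" "b2 \<in> X" "b2 \<in> Bg (int n2 * E + e2)"
    using assms(2) by (rule hlocE)
  have "x * y = fract_of (b1 * b2) / fract_of f ^ (n1 + n2)"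
    unfolding x y by (simp add: power_add)
  also have "\<dots> \<in> hloc X f (e1 + e2)"
  proof (rule hlocI)
    show "b1 * b2 \<in> X"
      using subring x(2) y(2) unfolding is_subring_def by blast
    show "b1 * b2 \<in> Bg (int (n1 + n2) * E + (e1 + e2))"
      using mult_mem[OF x(3) y(3)] by (simp add: algebra_simps)
  qed
  finally show ?thesis .
qed

lemma hloc_power: "x \<in> hloc X f e \<Longrightarrow> x ^ q \<in> hloc X f (int q * e)"
proof (induct q)
  case 0
  have "fract_of 1 / fract_of f ^ 0 \<in> hloc X f 0"
    using subring one_mem unfolding is_subring_def by (intro hlocI) auto
  then show ?case
    by simp
next
  case (Suc q)
  have "x * x ^ q \<in> hloc X f (e + int q * e)"
    by (rule hloc_mult[OF Suc.prems Suc.hyps[OF Suc.prems]])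
  then show ?case
    by (simp add: algebra_simps)
qed

lemma is_subring_hloc:
  assumes "f \<in> X"
  shows "is_subring (hloc X f 0)"
proof -
  have f_power: "f ^ n \<in> X" for n
    using subring assms by (induct n) (auto simp: is_subring_def)
  have plus_minus: "x + y \<in> hloc X f 0 \<and> x - y \<in> hloc X f 0"
    if x_mem: "x \<in> hloc X f 0" and y_mem: "y \<in> hloc X f 0" for x y
  proof -
    obtain b1 n1 where x: "x = fract_of b1 / fract_of f ^ n1" "b1 \<in> X" "b1 \<in> Bg (int n1 * E)"
      using hlocE[OF x_mem] by (metis add.right_neutral)
    obtain b2 n2 where y: "y = fract_of b2 / fract_of f ^ n2" "b2 \<in> X" "b2 \<in> Bg (int n2 * E)"
      using hlocE[OF y_mem] by (metis add.right_neutral)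
    have deg: "b1 * f ^ n2 \<in> Bg (int (n1 + n2) * E + 0)" "b2 * f ^ n1 \<in> Bg (int (n1 + n2) * E + 0)"
      by (auto intro!: mult_mem' x(3) y(3) power_mem f_mem simp: algebra_simps)
    have mem: "b1 * f ^ n2 \<in> X" "b2 * f ^ n1 \<in> X"
      using subring x(2) y(2) f_power unfolding is_subring_def by auto
    have "fract_of (b1 * f ^ n2 + b2 * f ^ n1) / fract_of f ^ (n1 + n2) \<in> hloc X f 0"
      "fract_of (b1 * f ^ n2 - b2 * f ^ n1) / fract_of f ^ (n1 + n2) \<in> hloc X f 0"
      by (intro hlocI; use deg mem subring in \<open>simp add: is_subring_def add_mem diff_mem\<close>)+
    moreover have "x + y = fract_of (b1 * f ^ n2 + b2 * f ^ n1) / fract_of f ^ (n1 + n2)"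
      "x - y = fract_of (b1 * f ^ n2 - b2 * f ^ n1) / fract_of f ^ (n1 + n2)"
      unfolding x y using f_nonzero by (simp_all add: field_simps power_add)
    ultimately show ?thesis
      by simp
  qed
  have "fract_of 0 / fract_of f ^ 0 \<in> hloc X f 0" "fract_of 1 / fract_of f ^ 0 \<in> hloc X f 0"
    using subring one_mem unfolding is_subring_def by (intro hlocI; simp)+
  then show ?thesis
    using plus_minus hloc_mult[of _ 0 _ 0] unfolding is_subring_def by auto
qed

end

end

end

section \<open>Graded locally nilpotent derivations\<close>

locale graded_lnd = Z_graded_domain Bg + Q_domain_derivation D
  for Bg :: "int \<Rightarrow> 'a::idom set" and D :: "'a \<Rightarrow> 'a" +
  fixes d :: int
  assumes D_mem: "x \<in> Bg i \<Longrightarrow> D x \<in> Bg (i + d)"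
    and locally_nilpotent: "locally_nilpotent D"
begin

lemma funpow_D_mem: "x \<in> Bg i \<Longrightarrow> (D ^^ j) x \<in> Bg (i + int j * d)"
  by (induct j) (auto dest: D_mem simp: algebra_simps)

lemma hcomp_D: "hcomp (D b) i = D (hcomp b (i - d))"
  using hcomp_additive_map[OF D_add D_mem] .

lemma D_hcomp_kernel: "D b = 0 \<Longrightarrow> D (hcomp b i) = 0"
  using hcomp_D[of b "i + d"] by simp

lemma exists_hcomp_not_kernel:
  assumes "D b \<noteq> 0"
  shows "\<exists>i. D (hcomp b i) \<noteq> 0"
proof (rule ccontr)
  assume "\<nexists>i. D (hcomp b i) \<noteq> 0"
  then have "D (\<Sum>i\<in>{i. hcomp b i \<noteq> 0}. hcomp b i) = 0"
    by (simp add: D_sum)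
  with assms show False
    by (simp add: sum_hcomp)
qed

lemma exists_homogeneous_local_slice:
  assumes "D \<noteq> (\<lambda>_. 0)"
  shows "\<exists>r \<delta>. r \<in> Bg \<delta> \<and> D r \<noteq> 0 \<and> D (D r) = 0"
proof -
  obtain b where "D b \<noteq> 0"
    using assms by auto
  then obtain i where "D (hcomp b i) \<noteq> 0"
    using exists_hcomp_not_kernel by blast
  moreover obtain n where "(D ^^ n) (hcomp b i) = 0"
    using locally_nilpotent unfolding locally_nilpotent_def by blast
  ultimately obtain k where "D ((D ^^ k) (hcomp b i)) \<noteq> 0" "D (D ((D ^^ k) (hcomp b i))) = 0"
    using exists_funpow_local_slice by blast
  then show ?thesis
    using funpow_D_mem[OF hcomp_mem] by blast
qed

lemma exists_kernel_element_nonzero_degree: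
  assumes "\<not> kernel \<subseteq> Bg 0"
  shows "\<exists>h e. D h = 0 \<and> h \<noteq> 0 \<and> h \<in> Bg e \<and> e \<noteq> 0"
proof -
  obtain b where "D b = 0" "b \<notin> Bg 0"
    using assms by blast
  then show ?thesis
    using exists_hcomp_outside D_hcomp_kernel hcomp_mem by blast
qed

lemma homogeneous_kernel_poly_expansion:
  assumes D_slice: "D r = f" and D_f: "D f = 0"
    and b_mem: "b \<in> Bg j" and f_mem: "f \<in> Bg e" and r_mem: "r \<in> Bg \<delta>"
  shows "\<exists>k P. (\<forall>i. D (coeff P i) = 0 \<and> coeff P i \<in> Bg (j + int k * e - int i * \<delta>))
    \<and> f ^ k * b = poly P r"
proof -
  obtain n where "(D ^^ n) b = 0"
    using locally_nilpotent unfolding locally_nilpotent_def by blast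
  then obtain k P where P: "\<forall>i. D (coeff P i) = 0" "f ^ k * b = poly P r"
    using kernel_poly_expansion[OF D_slice D_f] by blast
  define J where "J = j + int k * e"
  define Q where "Q = (\<Sum>i\<le>degree P. monom (hcomp (coeff P i) (J - int i * \<delta>)) i)"
  have "f ^ k * b \<in> Bg J"
    unfolding J_def using mult_mem[OF power_mem[OF f_mem] b_mem] by (simp add: algebra_simps)
  then have "f ^ k * b = hcomp (f ^ k * b) J"
    by (simp add: hcomp_homogeneous)
  also have "\<dots> = (\<Sum>i\<le>degree P. hcomp (coeff P i * r ^ i) J)"
    unfolding P(2) poly_altdef by (rule hcomp_sum)
  also have "\<dots> = (\<Sum>i\<le>degree P. hcomp (coeff P i) (J - int i * \<delta>) * r ^ i)"
    using hcomp_additive_map[of "\<lambda>x. x * r ^ _", OF distrib_right mult_mem[OF _ power_mem[OF r_mem]]]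
    by simp
  also have "\<dots> = poly Q r"
    unfolding Q_def by (simp add: poly_sum poly_monom)
  finally have "f ^ k * b = poly Q r" .
  moreover have "D (coeff Q i) = 0 \<and> coeff Q i \<in> Bg (j + int k * e - int i * \<delta>)" for i
    unfolding Q_def J_def by (cases "i \<le> degree P") (simp_all add: coeff_sum_monom coeff_sum P(1) D_hcomp_kernel hcomp_mem)
  ultimately show ?thesis
    by blast
qed

definition kernel_degrees :: "int set" where
  "kernel_degrees = {e. \<exists>a. D a = 0 \<and> a \<noteq> 0 \<and> a \<in> Bg e}"

definition kernel_degree_group :: "int set" where
  "kernel_degree_group = {u - v | u v. u \<in> kernel_degrees \<and> v \<in> kernel_degrees}"

lemma kernel_degreesI: "D a = 0 \<Longrightarrow> a \<noteq> 0 \<Longrightarrow> a \<in> Bg e \<Longrightarrow> e \<in> kernel_degrees"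
  unfolding kernel_degrees_def by blast

lemma zero_mem_kernel_degrees: "0 \<in> kernel_degrees"
  using kernel_degreesI[OF D_one one_neq_zero one_mem] .

lemma add_mem_kernel_degrees:
  assumes "x \<in> kernel_degrees" "y \<in> kernel_degrees"
  shows "x + y \<in> kernel_degrees"
proof -
  obtain a b where "D a = 0" "a \<noteq> 0" "a \<in> Bg x" "D b = 0" "b \<noteq> 0" "b \<in> Bg y"
    using assms unfolding kernel_degrees_def by blast
  then show ?thesis
    by (intro kernel_degreesI[of "a * b"]) (auto simp: D_mult_kernel mult_mem)
qed

lemma mult_mem_kernel_degrees:
  assumes "x \<in> kernel_degrees"
  shows "int n * x \<in> kernel_degrees"
proof -
  obtain a where "D a = 0" "a \<noteq> 0" "a \<in> Bg x"
    using assms unfolding kernel_degrees_def by blast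
  then show ?thesis
    by (intro kernel_degreesI[of "a ^ n"]) (auto simp: D_power_kernel power_mem)
qed

lemma kernel_degrees_subset_group: "x \<in> kernel_degrees \<Longrightarrow> x \<in> kernel_degree_group"
  unfolding kernel_degree_group_def using zero_mem_kernel_degrees by force

lemma diff_mem_kernel_degree_group:
  assumes "x \<in> kernel_degree_group" "y \<in> kernel_degree_group"
  shows "x - y \<in> kernel_degree_group"
proof -
  obtain u v u' v' where "x = u - v" "y = u' - v'"
    and "u \<in> kernel_degrees" "v \<in> kernel_degrees" "u' \<in> kernel_degrees" "v' \<in> kernel_degrees"
    using assms unfolding kernel_degree_group_def by blast
  then have "x - y = (u + v') - (v + u')" "u + v' \<in> kernel_degrees" "v + u' \<in> kernel_degrees"
    by (auto intro: add_mem_kernel_degrees)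
  then show ?thesis
    unfolding kernel_degree_group_def by blast
qed

lemma exists_least_kernel_degree_multiple:
  assumes "D h = 0" "h \<noteq> 0" "h \<in> Bg e" "e \<noteq> 0"
  shows "\<exists>m>0. int m * \<delta> \<in> kernel_degree_group
    \<and> (\<forall>i. int i * \<delta> \<in> kernel_degree_group \<longrightarrow> m dvd i)"
proof (rule exists_least_multiple_in_subgroup[OF diff_mem_kernel_degree_group])
  show "nat \<bar>e\<bar> > 0"
    using assms(4) by simp
  have "int (nat \<bar>\<delta>\<bar>) * e \<in> kernel_degree_group"
    using kernel_degrees_subset_group[OF mult_mem_kernel_degrees[OF kernel_degreesI[OF assms(1-3)]]] .
  moreover have "0 - int (nat \<bar>\<delta>\<bar>) * e \<in> kernel_degree_group"
    using diff_mem_kernel_degree_group[OF kernel_degrees_subset_group[OF zero_mem_kernel_degrees] calculation] .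
  moreover have "\<bar>e\<bar> * \<delta> = \<bar>\<delta>\<bar> * e \<or> \<bar>e\<bar> * \<delta> = 0 - \<bar>\<delta>\<bar> * e"
    by (cases "e \<ge> 0"; cases "\<delta> \<ge> 0") (auto simp: abs_if)
  ultimately show "int (nat \<bar>e\<bar>) * \<delta> \<in> kernel_degree_group"
    by auto
qed

section \<open>Cylindrical elements\<close>

context
  fixes r f :: 'a and E \<delta> :: int and m :: nat and v w :: "'a fract"
  assumes D_slice: "D r = f" and D_f: "D f = 0" and f_nonzero: "f \<noteq> 0"
    and f_mem: "f \<in> Bg E" and r_mem: "r \<in> Bg \<delta>" and m_pos: "m > 0"
    and kernel_degree_dvd:
      "\<And>a n i. D a = 0 \<Longrightarrow> a \<noteq> 0 \<Longrightarrow> a \<in> Bg (int n * E - int i * \<delta>) \<Longrightarrow> m dvd i"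
    and v_mem: "v \<in> hloc kernel f (- (int m * \<delta>))"
    and w_mem: "w \<in> hloc kernel f (int m * \<delta>)"
    and v_w: "v * w = 1"
begin

lemma hloc0_monomial:
  assumes "D a = 0" "a \<in> Bg (int N * E - int (m * q) * \<delta>)"
  shows "fract_of a / fract_of f ^ N * w ^ q \<in> hloc kernel f 0"
    and "fract_of a / fract_of f ^ N * w ^ q * (v * fract_of r ^ m) ^ q = fract_of (a * r ^ (m * q)) / fract_of f ^ N"
proof -
  have "fract_of a / fract_of f ^ N \<in> hloc kernel f (- (int q * (int m * \<delta>)))"
    by (rule hlocI[OF f_nonzero f_mem]) (use assms in \<open>simp_all add: algebra_simps\<close>)
  from hloc_mult[OF f_nonzero f_mem is_subring_kernel this
      hloc_power[OF f_nonzero f_mem is_subring_kernel w_mem, where q = q]]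
  show "fract_of a / fract_of f ^ N * w ^ q \<in> hloc kernel f 0"
    by simp
  have "w ^ q * v ^ q = 1"
    using v_w by (metis mult.commute power_mult_distrib power_one)
  then show "fract_of a / fract_of f ^ N * w ^ q * (v * fract_of r ^ m) ^ q
      = fract_of (a * r ^ (m * q)) / fract_of f ^ N"
    by (simp add: power_mult_distrib power_mult algebra_simps)
qed

lemma hloc0_generated:
  assumes "s \<in> hloc UNIV f 0"
  shows "\<exists>p. (\<forall>i. coeff p i \<in> hloc kernel f 0) \<and> poly p (v * fract_of r ^ m) = s"
proof -
  obtain b n where s: "s = fract_of b / fract_of f ^ n" "b \<in> Bg (int n * E + 0)"
    using hlocE[OF f_nonzero f_mem assms] by blast
  obtain k P where P: "\<forall>i. D (coeff P i) = 0 \<and> coeff P i \<in> Bg (int n * E + 0 + int k * E - int i * \<delta>)"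
      "f ^ k * b = poly P r"
    using homogeneous_kernel_poly_expansion[OF D_slice D_f s(2) f_mem r_mem] by blast
  define a where "a = coeff P"
  have a_kernel: "D (a i) = 0" and a_mem: "a i \<in> Bg (int (n + k) * E - int i * \<delta>)" for i
    using P(1) unfolding a_def by (simp_all add: algebra_simps)
  define c where "c q = fract_of (a (m * q)) / fract_of f ^ (n + k) * w ^ q" for q
  have c_mem: "c q \<in> hloc kernel f 0"
    and c_term: "c q * (v * fract_of r ^ m) ^ q = fract_of (a (m * q) * r ^ (m * q)) / fract_of f ^ (n + k)" for q
    unfolding c_def using hloc0_monomial[OF a_kernel a_mem] by simp_all
  define p where "p = (\<Sum>q\<le>degree P. monom (c q) q)"
  have "poly p (v * fract_of r ^ m) = fract_of (\<Sum>q\<le>degree P. a (m * q) * r ^ (m * q)) / fract_of f ^ (n + k)"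
    unfolding p_def by (simp add: poly_sum poly_monom c_term sum_divide_distrib del: fract_of_mult)
  also have "(\<Sum>q\<le>degree P. a (m * q) * r ^ (m * q)) = poly P r"
    unfolding poly_altdef a_def
    by (rule sum_atMost_multiples[OF m_pos]) (use kernel_degree_dvd[OF a_kernel _ a_mem] in \<open>auto simp: a_def coeff_eq_0\<close>)
  also have "fract_of (poly P r) / fract_of f ^ (n + k) = s"
    unfolding s(1) P(2)[symmetric] using f_nonzero by (simp add: power_add)
  moreover have "coeff p i \<in> hloc kernel f 0" for i
    using c_mem is_subring_hloc[OF f_nonzero f_mem is_subring_kernel] D_f
    unfolding p_def by (cases "i \<le> degree P") (auto simp: coeff_sum_monom coeff_sum is_subring_def)
  ultimately show ?thesis
    by blast
qed

lemma hloc0_independent: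
  assumes coeffs: "\<forall>i. coeff p i \<in> hloc kernel f 0" and root: "poly p (v * fract_of r ^ m) = 0"
  shows "p = 0"
proof -
  have "\<exists>a n. D a = 0 \<and> coeff p q * v ^ q = fract_of a / fract_of f ^ n" for q
  proof -
    have "coeff p q * v ^ q \<in> hloc kernel f (0 + int q * - (int m * \<delta>))"
      using hloc_mult[OF f_nonzero f_mem is_subring_kernel coeffs[rule_format]
          hloc_power[OF f_nonzero f_mem is_subring_kernel v_mem]] .
    then show ?thesis
      by (elim hlocE[OF f_nonzero f_mem]) blast
  qed
  then obtain a n where a_kernel: "\<And>q. D (a q) = 0"
    and a: "\<And>q. coeff p q * v ^ q = fract_of (a q) / fract_of f ^ n q"
    by metis
  define N where "N = degree p"
  define M where "M = (\<Sum>q\<le>N. n q)"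
  define y where "y q = a q * f ^ (M - n q)" for q
  have y: "fract_of f ^ M * (coeff p q * v ^ q) = fract_of (y q)" if "q \<le> N" for q
    unfolding a y_def using fract_of_clear_denominator[OF f_nonzero] that
    by (simp add: M_def member_le_sum del: fract_of_mult)
  have "fract_of f ^ M * poly p (v * fract_of r ^ m)
      = (\<Sum>q\<le>N. fract_of f ^ M * (coeff p q * v ^ q) * fract_of r ^ (m * q))"
    unfolding N_def poly_altdef
    by (simp add: sum_distrib_left power_mult_distrib power_mult[symmetric] mult_ac)
  also have "\<dots> = fract_of (\<Sum>q\<le>N. y q * r ^ (m * q))"
    by (simp add: y del: fract_of_mult) simp
  finally have root_y: "(\<Sum>q\<le>N. y q * r ^ (m * q)) = 0"
    using root by (simp del: fract_of_sum fract_of_mult fract_of_power)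
  have "coeff p q = 0" for q
  proof (cases "q \<le> N")
    case True
    have "y q = 0"
      using slice_power_transcendental[OF D_slice D_f f_nonzero m_pos _ root_y True]
      by (simp add: y_def a_kernel D_mult_kernel D_power_kernel D_f)
    then have "coeff p q * v ^ q = 0"
      using f_nonzero by (simp add: a y_def)
    moreover have "v \<noteq> 0"
      using v_w by auto
    ultimately show ?thesis
      by simp
  qed (simp add: N_def coeff_eq_0)
  then show ?thesis
    by (simp add: poly_eq_iff)
qed

lemma poly_ring_one_var_hloc0: "poly_ring_one_var (hloc0 Bg f)"
  unfolding poly_ring_one_var_def hloc0_eq_hloc
proof (intro conjI exI[of _ "hloc kernel f 0"] exI[of _ "v * fract_of r ^ m"])
  have UNIV_subring: "is_subring (UNIV :: 'a set)"
    by (simp add: is_subring_def)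
  show "is_subring (hloc UNIV f 0)"
    using is_subring_hloc[OF f_nonzero f_mem UNIV_subring] by simp
  show "is_subring (hloc kernel f 0)"
    using is_subring_hloc[OF f_nonzero f_mem is_subring_kernel] D_f by simp
  show "hloc kernel f 0 \<subseteq> hloc UNIV f 0"
    by (rule hloc_mono) simp
  have "fract_of (r ^ m) / fract_of f ^ 0 \<in> hloc UNIV f (int m * \<delta>)"
    by (rule hlocI[OF f_nonzero f_mem]) (simp_all add: power_mem[OF r_mem])
  from hloc_mult[OF f_nonzero f_mem UNIV_subring subsetD[OF hloc_mono[OF subset_UNIV] v_mem] this]
  show "v * fract_of r ^ m \<in> hloc UNIV f 0"
    by simp
qed (use hloc0_generated hloc0_independent in blast)+

end

lemma kernel_degree_multiple_dvd:
  assumes m_dvd: "\<And>i. int i * \<delta> \<in> kernel_degree_group \<Longrightarrow> m dvd i"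
    and "E \<in> kernel_degrees" "e \<in> kernel_degrees"
    and "D a = 0" "a \<noteq> 0" "a \<in> Bg (int n * E - int i * (\<delta> + e))"
  shows "m dvd i"
proof (rule m_dvd)
  have "int n * E - int i * (\<delta> + e) \<in> kernel_degree_group" "int n * E \<in> kernel_degree_group"
    using assms(2-6) by (auto intro: kernel_degrees_subset_group kernel_degreesI mult_mem_kernel_degrees)
  then have "int i * (\<delta> + e) \<in> kernel_degree_group"
    using diff_mem_kernel_degree_group by fastforce
  moreover have "int i * e \<in> kernel_degree_group"
    using assms(3) by (auto intro: kernel_degrees_subset_group mult_mem_kernel_degrees)
  ultimately show "int i * \<delta> \<in> kernel_degree_group"
    using diff_mem_kernel_degree_group by (fastforce simp: algebra_simps)
qed

text \<open>With \<open>c = \<alpha> * \<beta> * g\<close>, \<open>v = \<beta> / (\<alpha> * c ^ m)\<close> and \<open>w = 1 / v\<close> are written over powers of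
  \<open>f0 * c\<close>; for \<open>r = r0 * c\<close> the generator \<open>v * r ^ m\<close> is \<open>\<beta> * r0 ^ m / \<alpha>\<close>.\<close>

lemma exists_kernel_hloc_unit:
  assumes \<alpha>: "D \<alpha> = 0" "\<alpha> \<noteq> 0" "\<alpha> \<in> Bg ea" and \<beta>: "D \<beta> = 0" "\<beta> \<noteq> 0" "\<beta> \<in> Bg eb"
    and g: "D g = 0" "g \<noteq> 0" "g \<in> Bg eg" and f0: "D f0 = 0" "f0 \<noteq> 0" "f0 \<in> Bg ef"
    and m_\<delta>: "int m * \<delta> = ea - eb"
  shows "\<exists>v w. v \<in> hloc kernel (f0 * (\<alpha> * \<beta> * g)) (- (int m * (\<delta> + (ea + eb + eg))))
    \<and> w \<in> hloc kernel (f0 * (\<alpha> * \<beta> * g)) (int m * (\<delta> + (ea + eb + eg))) \<and> v * w = 1"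
proof -
  define c where "c = \<alpha> * \<beta> * g"
  define f where "f = f0 * c"
  define E where "E = ef + (ea + eb + eg)"
  have c: "D c = 0" "c \<noteq> 0" "c \<in> Bg (ea + eb + eg)"
    unfolding c_def using \<alpha> \<beta> g by (auto simp: D_mult_kernel intro: mult_mem)
  have f: "f \<noteq> 0" "f \<in> Bg E"
    unfolding f_def E_def using f0 c by (auto intro: mult_mem)
  have "fract_of (\<beta> * \<beta> * f0 ^ Suc m * g) / fract_of f ^ Suc m
      \<in> hloc kernel f (- (int m * (\<delta> + (ea + eb + eg))))"
  proof (rule hlocI[OF f])
    show "\<beta> * \<beta> * f0 ^ Suc m * g \<in> kernel"
      using \<beta> f0 g by (simp add: D_mult_kernel D_power_kernel)
    show "\<beta> * \<beta> * f0 ^ Suc m * g \<in> Bg (int (Suc m) * E + - (int m * (\<delta> + (ea + eb + eg))))"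
      by (rule mult_mem'[OF mult_mem[OF mult_mem[OF \<beta>(3) \<beta>(3)] power_mem[OF f0(3)]] g(3)])
        (use m_\<delta> in \<open>simp add: E_def algebra_simps\<close>)
  qed
  moreover have "fract_of (\<alpha> * \<alpha> * c ^ m * f0 * g) / fract_of f ^ 1
      \<in> hloc kernel f (int m * (\<delta> + (ea + eb + eg)))"
  proof (rule hlocI[OF f])
    show "\<alpha> * \<alpha> * c ^ m * f0 * g \<in> kernel"
      using \<alpha> c f0 g by (simp add: D_mult_kernel D_power_kernel)
    show "\<alpha> * \<alpha> * c ^ m * f0 * g \<in> Bg (int 1 * E + int m * (\<delta> + (ea + eb + eg)))"
      by (rule mult_mem'[OF mult_mem[OF mult_mem[OF mult_mem[OF \<alpha>(3) \<alpha>(3)] power_mem[OF c(3)]] f0(3)] g(3)])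
        (use m_\<delta> in \<open>simp add: E_def algebra_simps\<close>)
  qed
  moreover have "fract_of (\<beta> * \<beta> * f0 ^ Suc m * g) / fract_of f ^ Suc m
      * (fract_of (\<alpha> * \<alpha> * c ^ m * f0 * g) / fract_of f ^ 1) = 1"
    using f(1) unfolding f_def c_def by (simp add: field_simps power_mult_distrib)
  ultimately show ?thesis
    unfolding f_def c_def by blast
qed

lemma cylindrical_slice_multiple:
  assumes r0: "r0 \<in> Bg \<delta>" "D r0 \<noteq> 0" "D (D r0) = 0"
    and m: "m > 0" "\<And>i. int i * \<delta> \<in> kernel_degree_group \<Longrightarrow> m dvd i"
    and \<alpha>: "D \<alpha> = 0" "\<alpha> \<noteq> 0" "\<alpha> \<in> Bg ea" and \<beta>: "D \<beta> = 0" "\<beta> \<noteq> 0" "\<beta> \<in> Bg eb"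
    and m_\<delta>: "int m * \<delta> = ea - eb"
    and g: "D g = 0" "g \<noteq> 0" "g \<in> Bg eg"
    and degree: "\<delta> + d + ea + eb + eg \<noteq> 0"
  shows "D (D (r0 * (\<alpha> * \<beta> * g))) = 0" and "cylindrical Bg (D (r0 * (\<alpha> * \<beta> * g)))"
proof -
  define c where "c = \<alpha> * \<beta> * g"
  define f where "f = D r0 * c"
  define E where "E = \<delta> + d + (ea + eb + eg)"
  have c: "D c = 0" "c \<noteq> 0" "c \<in> Bg (ea + eb + eg)"
    unfolding c_def using \<alpha> \<beta> g by (auto simp: D_mult_kernel intro: mult_mem)
  have D_slice: "D (r0 * c) = f"
    unfolding f_def using c(1) by (simp add: D_mult)
  have f: "D f = 0" "f \<noteq> 0" "f \<in> Bg E"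
    unfolding f_def E_def using r0 c by (auto simp: D_mult_kernel intro: mult_mem D_mem)
  obtain v w where "v \<in> hloc kernel f (- (int m * (\<delta> + (ea + eb + eg))))"
    "w \<in> hloc kernel f (int m * (\<delta> + (ea + eb + eg)))" "v * w = 1"
    using exists_kernel_hloc_unit[OF \<alpha> \<beta> g r0(3,2) D_mem[OF r0(1)] m_\<delta>] unfolding f_def c_def by blast
  moreover have "m dvd i" if "D a = 0" "a \<noteq> 0" "a \<in> Bg (int n * E - int i * (\<delta> + (ea + eb + eg)))" for a n i
    using kernel_degree_multiple_dvd[OF m(2) kernel_degreesI[OF f] kernel_degreesI[OF c] that] .
  ultimately have "poly_ring_one_var (hloc0 Bg f)"
    using poly_ring_one_var_hloc0[OF D_slice f mult_mem[OF r0(1) c(3)] m(1)] by blast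
  then show "cylindrical Bg (D (r0 * (\<alpha> * \<beta> * g)))"
    using f degree unfolding cylindrical_def D_slice[unfolded c_def] E_def by (auto simp: add.assoc)
  show "D (D (r0 * (\<alpha> * \<beta> * g))) = 0"
    using D_slice f(1) unfolding c_def by simp
qed

end

theorem proposition4p3:
  fixes Bg :: "int \<Rightarrow> 'b::idom set" and D :: "'b \<Rightarrow> 'b"
  assumes "Z_graded Bg"
    and "contains_rationals TYPE('b)"
    and "derivation D"
    and "homogeneous_map Bg D"
    and "locally_nilpotent D"
    and "D \<noteq> (\<lambda>_. 0)"
    and "\<not> {b. D b = 0} \<subseteq> Bg 0"
  shows "\<exists>f \<in> range D \<inter> {b. D b = 0}. cylindrical Bg f"
proof -
  obtain d where "\<And>i x. x \<in> Bg i \<Longrightarrow> D x \<in> Bg (i + d)"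
    using assms(4) unfolding homogeneous_map_def by blast
  then interpret graded_lnd Bg D d
    using assms(1-3,5) by unfold_locales auto
  obtain h eh where h: "D h = 0" "h \<noteq> 0" "h \<in> Bg eh" "eh \<noteq> 0"
    using exists_kernel_element_nonzero_degree assms(7) by blast
  obtain r0 \<delta> where r0: "r0 \<in> Bg \<delta>" "D r0 \<noteq> 0" "D (D r0) = 0"
    using exists_homogeneous_local_slice assms(6) by blast
  obtain m where m: "m > 0" "int m * \<delta> \<in> kernel_degree_group"
    "\<And>i. int i * \<delta> \<in> kernel_degree_group \<Longrightarrow> m dvd i"
    using exists_least_kernel_degree_multiple[OF h] by blast
  obtain \<alpha> \<beta> ea eb where \<alpha>\<beta>: "D \<alpha> = 0" "\<alpha> \<noteq> 0" "\<alpha> \<in> Bg ea"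
    "D \<beta> = 0" "\<beta> \<noteq> 0" "\<beta> \<in> Bg eb" "int m * \<delta> = ea - eb"
    using m(2) unfolding kernel_degree_group_def kernel_degrees_def by blast
  obtain g eg where g: "D g = 0" "g \<noteq> 0" "g \<in> Bg eg" "\<delta> + d + ea + eb + eg \<noteq> 0"
    using D_one one_mem h by (cases "\<delta> + d + ea + eb = 0") fastforce+
  show ?thesis
    using cylindrical_slice_multiple[OF r0 m(1,3) \<alpha>\<beta> g] by blast
qed

end
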